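(* Let $P$ be a probability distribution of a random variable $\xi$, $\mathcal X\subseteq\mathbb R^d$, $\lambda>0$. Assume: (i) for every $\xi$, $x\mapsto \ell(x;\xi)$ is $G$-Lipschitz continuous and $L$-smooth on $\mathcal X$; (ii) $\psi:\mathbb R\to[0,+\infty]$ is convex, $\psi(1)=0$, $\psi(t)=+\infty$ for $t<0$, and $\psi^*(t)=\sup_s(st-\psi(s))$ is $M$-smooth. Let $\widehat{\mathcal L}(x,\eta)=\mathbb E_{\xi\sim P}\big[\lambda\psi^*\big(\frac{\ell(x;\xi)-G\eta}{\lambda}\big)+G\eta\big]$. Then for any $(x,\eta)$ and $(x',\eta')$, $$\|\nabla\widehat{\mathcal L}(x,\eta)-\nabla\widehat{\mathcal L}(x',\eta')\|\le\Big(K+\frac LG\|\nabla\widehat{\mathcal L}(x,\eta)\|\Big)\|(x-x',\eta-\eta')\|,$$ where $K=L+2G^2\lambda^{-1}M$.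
   Context: Norms are Euclidean; gradients are with respect to $(x,\eta)\in\mathbb R^{d+1}$. *)

theory Defs
  imports "HOL-Analysis.Analysis" "HOL-Probability.Probability"
begin

definition convex_ereal_fun :: "(real \<Rightarrow> ereal) \<Rightarrow> bool" where
  "convex_ereal_fun f \<longleftrightarrow>
     (\<forall>s t a. 0 \<le> a \<and> a \<le> 1 \<longrightarrow>
        f (a * s + (1 - a) * t) \<le> ereal a * f s + ereal (1 - a) * f t)"

definition conj_fun :: "(real \<Rightarrow> ereal) \<Rightarrow> real \<Rightarrow> ereal" where
  "conj_fun \<psi> t = (SUP s. ereal (s * t) - \<psi> s)"

definition smooth_on :: "'a::real_inner set \<Rightarrow> ('a \<Rightarrow> real) \<Rightarrow> real \<Rightarrow> bool" where
  "smooth_on S f L \<longleftrightarrow>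
     (\<exists>g. (\<forall>x\<in>S. GDERIV f x :> g x) \<and>
          (\<forall>x\<in>S. \<forall>y\<in>S. norm (g x - g y) \<le> L * norm (x - y)))"

definition Lhat :: "'b measure \<Rightarrow> ('x \<Rightarrow> 'b \<Rightarrow> real) \<Rightarrow> (real \<Rightarrow> ereal) \<Rightarrow> real \<Rightarrow> real
                    \<Rightarrow> 'x \<times> real \<Rightarrow> real" where
  "Lhat P l \<psi> lam G = (\<lambda>(x, \<eta>). LINT \<xi>|P.
      lam * real_of_ereal (conj_fun \<psi> ((l x \<xi> - G * \<eta>) / lam)) + G * \<eta>)"

end

theory Submission
  imports Defs
begin

text \<open>Write \<open>u = (l(x;\<xi>) - G\<eta>)/\<lambda>\<close>. Per sample, the integrand has gradient
  \<open>(\<psi>*'(u) \<nabla>l(x;\<xi>), G - G \<psi>*'(u))\<close>, and its Taylor remainder is quadratic with the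
  integrable constant \<open>L \<psi>*'(u) + 2G\<^sup>2M/\<lambda>\<close>, which justifies differentiating under the integral.
  Because \<open>\<psi> = \<infinity>\<close> on the negative reals, \<open>\<psi>*\<close> is nondecreasing, so \<open>\<psi>*'(u) \<ge> 0\<close>; the
  \<open>\<eta>\<close>-component of \<open>\<nabla>Lhat\<close> is \<open>G (1 - E \<psi>*'(u))\<close>, hence \<open>E \<psi>*'(u) \<le> 1 + \<parallel>\<nabla>Lhat\<parallel>/G\<close>.
  The per-sample gradients differ by at most \<open>L \<psi>*'(u) \<parallel>x - x'\<parallel> + 2G\<^sup>2M/\<lambda> \<parallel>(x,\<eta>) - (x',\<eta>')\<parallel>\<close>,
  and taking expectations gives the bound. For \<open>G = 0\<close> the loss does not depend on \<open>x\<close> and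
  the objective is locally constant.\<close>

lemma gderiv_linearization_bound:
  fixes f :: "'a::euclidean_space \<Rightarrow> real"
  assumes "convex S" and deriv: "\<And>w. w \<in> S \<Longrightarrow> GDERIV f w :> f' w"
    and lip: "\<And>w. w \<in> S \<Longrightarrow> norm (f' w - f' z) \<le> K * norm (w - z)"
    and "z \<in> S" "w \<in> S" "K \<ge> 0"
  shows "\<bar>f w - f z - (w - z) \<bullet> f' z\<bar> \<le> K * (norm (w - z))\<^sup>2"
proof -
  let ?T = "closed_segment z w"
  have T: "?T \<subseteq> S"
    using assms by (simp add: closed_segment_subset)
  have "norm (f w - f z - (w - z) \<bullet> f' z) \<le> norm (w - z) * (K * norm (w - z))"
  proof (rule differentiable_bound_linearization[where S = ?T and f' = "\<lambda>v h. h \<bullet> f' v"])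
    show "z + t *\<^sub>R (w - z) \<in> ?T" if "t \<in> {0..1}" for t
      using that by (auto simp: in_segment algebra_simps intro!: exI[of _ t])
    show "(f has_derivative (\<lambda>h. h \<bullet> f' v)) (at v within ?T)" if "v \<in> ?T" for v
      using deriv[of v] T that by (auto simp: gderiv_def intro: has_derivative_at_withinI)
    show "onorm ((\<lambda>h. h \<bullet> f' v) - (\<lambda>h. h \<bullet> f' z)) \<le> K * norm (w - z)" if v: "v \<in> ?T" for v
      unfolding fun_diff_def
    proof (rule onorm_bound)
      show "0 \<le> K * norm (w - z)"
        using \<open>K \<ge> 0\<close> by simp
      fix h
      have "norm (v - z) \<le> norm (w - z)"
        using v by (metis dist_commute dist_norm dist_in_closed_segment)
      have "norm (h \<bullet> f' v - h \<bullet> f' z) \<le> norm h * norm (f' v - f' z)"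
        by (simp add: Cauchy_Schwarz_ineq2 flip: inner_diff_right)
      also have "\<dots> \<le> norm h * (K * norm (v - z))"
        using lip[of v] v T by (intro mult_left_mono) auto
      also have "\<dots> \<le> norm h * (K * norm (w - z))"
        using \<open>norm (v - z) \<le> norm (w - z)\<close> \<open>K \<ge> 0\<close> by (intro mult_left_mono) auto
      finally show "norm (h \<bullet> f' v - h \<bullet> f' z) \<le> K * norm (w - z) * norm h"
        by (simp add: ac_simps)
    qed
  qed simp
  then show ?thesis
    by (simp add: power2_eq_square ac_simps)
qed

lemma gderiv_directional:
  fixes f :: "'a::real_inner \<Rightarrow> real"
  assumes "GDERIV f x :> g"
  shows "((\<lambda>t. f (x + t *\<^sub>R v)) has_real_derivative v \<bullet> g) (at 0)"
proof -
  have "((\<lambda>t. x + t *\<^sub>R v) has_derivative (\<lambda>t. t *\<^sub>R v)) (at 0)"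
    by (auto intro!: derivative_eq_intros)
  moreover have "(f has_derivative (\<lambda>h. h \<bullet> g)) (at (x + 0 *\<^sub>R v))"
    using assms by (simp add: gderiv_def)
  ultimately have "((\<lambda>t. f (x + t *\<^sub>R v)) has_derivative (\<lambda>t. (t *\<^sub>R v) \<bullet> g)) (at 0)"
    by (rule has_derivative_compose[unfolded o_def])
  then show ?thesis
    unfolding has_field_derivative_def by (rule has_derivative_eq_rhs) auto
qed

lemma gderiv_norm_le_lipschitz:
  fixes f :: "'a::real_inner \<Rightarrow> real"
  assumes "open X" "x \<in> X" and lip: "G-lipschitz_on X f" and "GDERIV f x :> g"
  shows "norm g \<le> G"
proof -
  have "((\<lambda>t. (f (x + t *\<^sub>R g) - f x) / t) \<longlongrightarrow> g \<bullet> g) (at_right 0)"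
    using gderiv_directional[OF \<open>GDERIV f x :> g\<close>, of g]
    unfolding DERIV_def by (simp add: filterlim_at_split)
  moreover have "\<forall>\<^sub>F t in at_right 0. (f (x + t *\<^sub>R g) - f x) / t \<le> G * norm g"
  proof -
    have "((\<lambda>t. x + t *\<^sub>R g) \<longlongrightarrow> x) (at_right 0)"
      by (auto intro!: tendsto_eq_intros)
    then have "\<forall>\<^sub>F t in at_right 0. x + t *\<^sub>R g \<in> X"
      using \<open>open X\<close> \<open>x \<in> X\<close> by (rule topological_tendstoD)
    moreover have "\<forall>\<^sub>F t in at_right 0. t > (0::real)"
      by (rule eventually_at_right_less)
    ultimately show ?thesis
    proof eventually_elim
      case (elim t)
      then have "f (x + t *\<^sub>R g) - f x \<le> G * (t * norm g)"
        using lipschitz_onD[OF lip, of "x + t *\<^sub>R g" x] \<open>x \<in> X\<close> by (simp add: dist_norm)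
      with \<open>t > 0\<close> show ?case
        by (simp add: divide_le_eq ac_simps)
    qed
  qed
  ultimately have "(norm g)\<^sup>2 \<le> G * norm g"
    by (simp add: power2_norm_eq_inner tendsto_upperbound)
  moreover have "G \<ge> 0"
    using lip by (rule lipschitz_on_nonneg)
  ultimately show ?thesis
    by (cases "g = 0") (auto simp: power2_eq_square)
qed

lemma gderiv_of_quadratic_remainder:
  fixes F :: "'a::real_inner \<Rightarrow> real"
  assumes "r > 0"
    and remainder: "\<And>w. w \<in> ball z r \<Longrightarrow> \<bar>F w - F z - (w - z) \<bullet> g\<bar> \<le> K * (norm (w - z))\<^sup>2"
  shows "GDERIV F z :> g"
  unfolding gderiv_def has_derivative_at_alt
proof (intro conjI allI impI bounded_linear_inner_left)
  fix e :: real assume "e > 0"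
  define d where "d = min r (e / (\<bar>K\<bar> + 1))"
  show "\<exists>d>0. \<forall>w. norm (w - z) < d \<longrightarrow> norm (F w - F z - (w - z) \<bullet> g) \<le> e * norm (w - z)"
  proof (intro exI[of _ d] conjI allI impI)
    show "d > 0"
      using \<open>r > 0\<close> \<open>e > 0\<close> by (simp add: d_def)
    fix w assume w: "norm (w - z) < d"
    then have "w \<in> ball z r"
      by (simp add: d_def dist_norm norm_minus_commute)
    have "(\<bar>K\<bar> + 1) * norm (w - z) \<le> e"
      using w by (simp add: d_def field_simps add_pos_nonneg)
    then have "K * norm (w - z) \<le> e"
      by (smt (verit, best) mult_right_mono norm_ge_zero abs_ge_self)
    then have "K * (norm (w - z))\<^sup>2 \<le> e * norm (w - z)"
      by (simp add: power2_eq_square mult_right_mono flip: mult.assoc)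
    then show "norm (F w - F z - (w - z) \<bullet> g) \<le> e * norm (w - z)"
      using remainder[OF \<open>w \<in> ball z r\<close>] by simp
  qed
qed

lemma borel_measurable_gderiv:
  fixes f :: "'a::euclidean_space \<Rightarrow> 'b \<Rightarrow> real"
  assumes "r > 0" and meas: "\<And>w. w \<in> ball z r \<Longrightarrow> f w \<in> borel_measurable M"
    and deriv: "\<And>\<xi>. \<xi> \<in> space M \<Longrightarrow> GDERIV (\<lambda>w. f w \<xi>) z :> f' \<xi>"
  shows "f' \<in> borel_measurable M"
proof (rule borel_measurable_euclidean_space[THEN iffD2], intro ballI)
  fix i :: 'a assume i: "i \<in> Basis"
  define t where "t n = r / real (n + 2)" for n
  have t_pos: "t n > 0" for n
    using \<open>r > 0\<close> by (simp add: t_def)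
  have t_ball: "z + t n *\<^sub>R i \<in> ball z r" for n
    using t_pos[of n] \<open>r > 0\<close> i by (simp add: t_def dist_norm field_simps add_pos_nonneg)
  have "t \<longlonglongrightarrow> 0"
    unfolding t_def using LIMSEQ_ignore_initial_segment[OF lim_const_over_n[of r], of 2] by simp
  then have t_at: "filterlim t (at 0) sequentially"
    using t_pos by (auto simp: filterlim_at less_imp_neq[symmetric])
  show "(\<lambda>\<xi>. f' \<xi> \<bullet> i) \<in> borel_measurable M"
  proof (rule borel_measurable_LIMSEQ_real[where u = "\<lambda>n \<xi>. (f (z + t n *\<^sub>R i) \<xi> - f z \<xi>) / t n"])
    show "(\<lambda>\<xi>. (f (z + t n *\<^sub>R i) \<xi> - f z \<xi>) / t n) \<in> borel_measurable M" for n
      using meas[OF t_ball[of n]] meas[OF centre_in_ball[THEN iffD2, OF \<open>r > 0\<close>]] by measurable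
    fix \<xi> assume "\<xi> \<in> space M"
    have "((\<lambda>h. (f (z + h *\<^sub>R i) \<xi> - f z \<xi>) / h) \<longlongrightarrow> i \<bullet> f' \<xi>) (at 0)"
      using gderiv_directional[OF deriv[OF \<open>\<xi> \<in> space M\<close>], of i] by (simp add: DERIV_def)
    from filterlim_compose[OF this t_at]
    show "(\<lambda>n. (f (z + t n *\<^sub>R i) \<xi> - f z \<xi>) / t n) \<longlonglongrightarrow> f' \<xi> \<bullet> i"
      by (simp add: inner_commute)
  qed
qed

lemma gderiv_integral:
  fixes f :: "'a::euclidean_space \<Rightarrow> 'b \<Rightarrow> real"
  assumes "r > 0" and f_int: "\<And>w. w \<in> ball z r \<Longrightarrow> integrable M (f w)"
    and remainder: "\<And>w \<xi>. w \<in> ball z r \<Longrightarrow> \<xi> \<in> space M \<Longrightarrow>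
      \<bar>f w \<xi> - f z \<xi> - (w - z) \<bullet> f' \<xi>\<bar> \<le> C \<xi> * (norm (w - z))\<^sup>2"
    and "integrable M C"
    and "integrable M B" and f'_bound: "\<And>\<xi>. \<xi> \<in> space M \<Longrightarrow> norm (f' \<xi>) \<le> B \<xi>"
  shows "integrable M f' \<and> GDERIV (\<lambda>w. LINT \<xi>|M. f w \<xi>) z :> (LINT \<xi>|M. f' \<xi>)"
proof
  have "f' \<in> borel_measurable M"
  proof (rule borel_measurable_gderiv[OF \<open>r > 0\<close>])
    show "f w \<in> borel_measurable M" if "w \<in> ball z r" for w
      using f_int[OF that] by simp
    show "GDERIV (\<lambda>w. f w \<xi>) z :> f' \<xi>" if "\<xi> \<in> space M" for \<xi>
      using gderiv_of_quadratic_remainder[OF \<open>r > 0\<close> remainder[OF _ that]] .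
  qed
  then show f'_int: "integrable M f'"
  proof (rule Bochner_Integration.integrable_bound[OF \<open>integrable M B\<close>])
    show "AE \<xi> in M. norm (f' \<xi>) \<le> norm (B \<xi>)"
      using f'_bound by (intro AE_I2) force
  qed
  show "GDERIV (\<lambda>w. LINT \<xi>|M. f w \<xi>) z :> (LINT \<xi>|M. f' \<xi>)"
  proof (rule gderiv_of_quadratic_remainder[OF \<open>r > 0\<close>])
    fix w assume w: "w \<in> ball z r"
    have z: "z \<in> ball z r"
      using \<open>r > 0\<close> by simp
    have "(LINT \<xi>|M. f w \<xi>) - (LINT \<xi>|M. f z \<xi>) - (w - z) \<bullet> (LINT \<xi>|M. f' \<xi>)
        = (LINT \<xi>|M. f w \<xi> - f z \<xi> - (w - z) \<bullet> f' \<xi>)"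
      using f_int[OF w] f_int[OF z] f'_int by simp
    also have "\<bar>\<dots>\<bar> \<le> (LINT \<xi>|M. \<bar>f w \<xi> - f z \<xi> - (w - z) \<bullet> f' \<xi>\<bar>)"
      using integral_norm_bound[of M "\<lambda>\<xi>. f w \<xi> - f z \<xi> - (w - z) \<bullet> f' \<xi>"] by simp
    also have "\<dots> \<le> (LINT \<xi>|M. C \<xi> * (norm (w - z))\<^sup>2)"
      using f_int[OF w] f_int[OF z] f'_int \<open>integrable M C\<close> remainder[OF w]
      by (intro integral_mono) auto
    also have "\<dots> = (LINT \<xi>|M. C \<xi>) * (norm (w - z))\<^sup>2"
      by simp
    finally show "\<bar>(LINT \<xi>|M. f w \<xi>) - (LINT \<xi>|M. f z \<xi>) - (w - z) \<bullet> (LINT \<xi>|M. f' \<xi>)\<bar>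
        \<le> (LINT \<xi>|M. C \<xi>) * (norm (w - z))\<^sup>2" .
  qed
qed

lemma smooth_on_nonneg:
  fixes f :: "'a::euclidean_space \<Rightarrow> real"
  assumes "open S" "S \<noteq> {}" "smooth_on S f L"
  shows "L \<ge> 0"
proof -
  obtain f' :: "'a \<Rightarrow> 'a" where lip: "\<forall>x\<in>S. \<forall>y\<in>S. norm (f' x - f' y) \<le> L * norm (x - y)"
    using \<open>smooth_on S f L\<close> unfolding smooth_on_def by blast
  obtain x e where "x \<in> S" "e > 0" "ball x e \<subseteq> S"
    using \<open>open S\<close> \<open>S \<noteq> {}\<close> open_contains_ball by blast
  obtain b :: 'a where "b \<in> Basis"
    using nonempty_Basis by blast
  define y where "y = x + (e / 2) *\<^sub>R b"
  have "norm (x - y) = e / 2"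
    using \<open>b \<in> Basis\<close> \<open>e > 0\<close> by (simp add: y_def)
  with \<open>ball x e \<subseteq> S\<close> \<open>e > 0\<close> have "y \<in> S"
    by (auto simp: dist_norm)
  have "norm (f' x - f' y) \<le> L * (e / 2)"
    using lip \<open>x \<in> S\<close> \<open>y \<in> S\<close> \<open>norm (x - y) = e / 2\<close> by metis
  then have "0 \<le> L * (e / 2)"
    by (rule order_trans[OF norm_ge_zero])
  with \<open>e > 0\<close> show ?thesis
    by (simp add: zero_le_mult_iff)
qed

lemma conj_fun_mono:
  assumes "\<And>s. s < 0 \<Longrightarrow> \<psi> s = \<infinity>"
  shows "mono (conj_fun \<psi>)"
  unfolding conj_fun_def
proof (intro monoI SUP_mono bexI UNIV_I)
  fix s t :: real and a assume "s \<le> t"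
  show "ereal (a * s) - \<psi> a \<le> ereal (a * t) - \<psi> a"
  proof (cases "a < 0")
    case True
    then show ?thesis
      using assms by simp
  next
    case False
    with \<open>s \<le> t\<close> have "a * s \<le> a * t"
      by (simp add: mult_left_mono)
    then show ?thesis
      by (cases "\<psi> a") auto
  qed
qed

lemma norm_fst_add_norm_snd_le: "norm (fst z) + norm (snd z) \<le> sqrt 2 * norm z"
proof -
  have "(norm (fst z) + norm (snd z))\<^sup>2 \<le> 2 * ((norm (fst z))\<^sup>2 + (norm (snd z))\<^sup>2)"
    using zero_le_power2[of "norm (fst z) - norm (snd z)"] by (simp add: power2_eq_square algebra_simps)
  then have "norm (fst z) + norm (snd z) \<le> sqrt (2 * ((norm (fst z))\<^sup>2 + (norm (snd z))\<^sup>2))"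
    by (rule real_le_rsqrt)
  also have "\<dots> = sqrt 2 * norm z"
    by (cases z) (simp only: norm_Pair real_sqrt_mult fst_conv snd_conv)
  finally show ?thesis .
qed

lemma norm_scaled_pair_diff_le:
  fixes g g' :: "'a::real_normed_vector"
  assumes "norm g' \<le> G"
  shows "norm ((s *\<^sub>R g, G - G * s) - (s' *\<^sub>R g', G - G * s'))
    \<le> \<bar>s\<bar> * norm (g - g') + sqrt 2 * G * \<bar>s - s'\<bar>"
proof -
  have "(s *\<^sub>R g, G - G * s) - (s' *\<^sub>R g', G - G * s') = (s *\<^sub>R (g - g'), 0) + (s - s') *\<^sub>R (g', - G)"
    by (simp add: algebra_simps)
  moreover have "norm (g', - G) \<le> sqrt 2 * G"
  proof -
    have "norm (g', - G) \<le> sqrt (2 * G\<^sup>2)"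
      unfolding norm_Pair using assms by (intro real_sqrt_le_mono) (simp add: power_mono)
    also have "\<dots> = sqrt 2 * G"
      using order_trans[OF norm_ge_zero assms] by (simp add: real_sqrt_mult)
    finally show ?thesis .
  qed
  then have "norm ((s - s') *\<^sub>R (g', - G)) \<le> \<bar>s - s'\<bar> * (sqrt 2 * G)"
    unfolding norm_scaleR by (rule mult_left_mono) simp
  ultimately show ?thesis
    using norm_triangle_ineq[of "(s *\<^sub>R (g - g'), 0::real)" "(s - s') *\<^sub>R (g', - G)"]
    by (simp add: norm_Pair ac_simps)
qed

locale dro_objective = prob_space P for P :: "'b measure" +
  fixes l :: "'a::euclidean_space \<Rightarrow> 'b \<Rightarrow> real" and X :: "'a set"
    and \<psi> :: "real \<Rightarrow> ereal" and lam G L M :: real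
  assumes open_X: "open X" and lam_pos: "lam > 0"
    and loss_lipschitz: "\<And>\<xi>. \<xi> \<in> space P \<Longrightarrow> G-lipschitz_on X (\<lambda>x. l x \<xi>)"
    and loss_smooth: "\<And>\<xi>. \<xi> \<in> space P \<Longrightarrow> smooth_on X (\<lambda>x. l x \<xi>) L"
    and loss_measurable: "\<And>x. x \<in> X \<Longrightarrow> (\<lambda>\<xi>. l x \<xi>) \<in> borel_measurable P"
    and psi_neg: "\<And>t. t < 0 \<Longrightarrow> \<psi> t = \<infinity>"
    and conj_finite: "\<And>t. \<bar>conj_fun \<psi> t\<bar> \<noteq> \<infinity>"
    and conj_smooth: "smooth_on UNIV (\<lambda>t. real_of_ereal (conj_fun \<psi> t)) M"
    and conj_integrable: "\<And>x \<eta>. x \<in> X \<Longrightarrow>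
      integrable P (\<lambda>\<xi>. real_of_ereal (conj_fun \<psi> ((l x \<xi> - G * \<eta>) / lam)))"
begin

definition psi_conj :: "real \<Rightarrow> real" where
  "psi_conj t = real_of_ereal (conj_fun \<psi> t)"

lemma
  shows psi_conj_has_deriv: "(psi_conj has_real_derivative deriv psi_conj t) (at t)"
    and deriv_psi_conj_lipschitz: "\<bar>deriv psi_conj s - deriv psi_conj t\<bar> \<le> M * \<bar>s - t\<bar>"
proof -
  obtain d where d: "\<And>t. GDERIV psi_conj t :> d t" "\<And>s t. norm (d s - d t) \<le> M * norm (s - t)"
    using conj_smooth unfolding smooth_on_def psi_conj_def[abs_def] by blast
  have "deriv psi_conj = d"
    using d(1) by (simp add: DERIV_imp_deriv fun_eq_iff)
  with d show "(psi_conj has_real_derivative deriv psi_conj t) (at t)"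
    and "\<bar>deriv psi_conj s - deriv psi_conj t\<bar> \<le> M * \<bar>s - t\<bar>"
    by simp_all
qed

lemma M_nonneg: "M \<ge> 0"
  using deriv_psi_conj_lipschitz[of 1 0] abs_ge_zero[of "deriv psi_conj 1 - deriv psi_conj 0"] by simp

lemma continuous_on_deriv_psi_conj: "continuous_on UNIV (deriv psi_conj)"
  using deriv_psi_conj_lipschitz M_nonneg
  by (intro lipschitz_on_continuous_on[of M] lipschitz_onI) (auto simp: dist_real_def)

lemma mono_psi_conj: "mono psi_conj"
proof
  fix s t :: real assume "s \<le> t"
  then have "conj_fun \<psi> s \<le> conj_fun \<psi> t"
    using conj_fun_mono[OF psi_neg] by (simp add: monoD)
  with conj_finite[of s] conj_finite[of t] show "psi_conj s \<le> psi_conj t"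
    unfolding psi_conj_def by (cases "conj_fun \<psi> s"; cases "conj_fun \<psi> t") auto
qed

lemma deriv_psi_conj_nonneg: "deriv psi_conj t \<ge> 0"
  using mono_on_imp_deriv_nonneg[OF mono_psi_conj psi_conj_has_deriv] by simp

lemma deriv_psi_conj_le: "deriv psi_conj t \<le> psi_conj (t + 1) - psi_conj t + M"
proof -
  have "\<bar>psi_conj (t + 1) - psi_conj t - (t + 1 - t) \<bullet> deriv psi_conj t\<bar> \<le> M * (norm (t + 1 - t))\<^sup>2"
    using psi_conj_has_deriv deriv_psi_conj_lipschitz M_nonneg
    by (intro gderiv_linearization_bound[where S = UNIV]) auto
  then show ?thesis
    by simp
qed

definition loss_grad :: "'b \<Rightarrow> 'a \<Rightarrow> 'a" where
  "loss_grad \<xi> = (SOME g. (\<forall>x\<in>X. GDERIV (\<lambda>x. l x \<xi>) x :> g x) \<and>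
      (\<forall>x\<in>X. \<forall>y\<in>X. norm (g x - g y) \<le> L * norm (x - y)))"

lemma
  assumes "\<xi> \<in> space P"
  shows loss_has_grad: "x \<in> X \<Longrightarrow> GDERIV (\<lambda>x. l x \<xi>) x :> loss_grad \<xi> x"
    and loss_grad_lipschitz: "x \<in> X \<Longrightarrow> y \<in> X \<Longrightarrow> norm (loss_grad \<xi> x - loss_grad \<xi> y) \<le> L * norm (x - y)"
  using someI_ex[OF loss_smooth[OF assms, unfolded smooth_on_def]] by (simp_all add: loss_grad_def)

lemma norm_loss_grad_le: "\<xi> \<in> space P \<Longrightarrow> x \<in> X \<Longrightarrow> norm (loss_grad \<xi> x) \<le> G"
  using gderiv_norm_le_lipschitz[OF open_X _ loss_lipschitz loss_has_grad] .

lemma abs_loss_diff_le: "\<xi> \<in> space P \<Longrightarrow> x \<in> X \<Longrightarrow> y \<in> X \<Longrightarrow> \<bar>l x \<xi> - l y \<xi>\<bar> \<le> G * norm (x - y)"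
  using lipschitz_onD[OF loss_lipschitz] by (simp add: dist_real_def dist_norm)

lemma G_nonneg: "G \<ge> 0"
  using not_empty loss_lipschitz lipschitz_on_nonneg by blast

lemma L_nonneg: "X \<noteq> {} \<Longrightarrow> L \<ge> 0"
  using not_empty loss_smooth smooth_on_nonneg[OF open_X] by blast

definition scaled_loss :: "'a \<times> real \<Rightarrow> 'b \<Rightarrow> real" where
  "scaled_loss w \<xi> = (l (fst w) \<xi> - G * snd w) / lam"

definition sample_obj :: "'a \<times> real \<Rightarrow> 'b \<Rightarrow> real" where
  "sample_obj w \<xi> = lam * psi_conj (scaled_loss w \<xi>) + G * snd w"

definition sample_grad :: "'a \<times> real \<Rightarrow> 'b \<Rightarrow> 'a \<times> real" where
  "sample_grad w \<xi> = (deriv psi_conj (scaled_loss w \<xi>) *\<^sub>R loss_grad \<xi> (fst w),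
      G - G * deriv psi_conj (scaled_loss w \<xi>))"

lemma Lhat_eq_integral: "Lhat P l \<psi> lam G = (\<lambda>w. LINT \<xi>|P. sample_obj w \<xi>)"
  by (auto simp: Lhat_def sample_obj_def scaled_loss_def psi_conj_def fun_eq_iff)

lemma integrable_psi_conj_scaled_loss:
  "fst w \<in> X \<Longrightarrow> integrable P (\<lambda>\<xi>. psi_conj (scaled_loss w \<xi>))"
  using conj_integrable[of "fst w" "snd w"] by (simp add: scaled_loss_def psi_conj_def)

lemma integrable_sample_obj: "fst w \<in> X \<Longrightarrow> integrable P (sample_obj w)"
  unfolding sample_obj_def[abs_def] using integrable_psi_conj_scaled_loss by simp

lemma borel_measurable_scaled_loss: "fst w \<in> X \<Longrightarrow> scaled_loss w \<in> borel_measurable P"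
  using loss_measurable[of "fst w"] unfolding scaled_loss_def[abs_def] by measurable

text \<open>\<open>\<psi>*'(u) \<le> \<psi>*(u + 1) - \<psi>*(u) + M\<close>, and shifting \<open>\<eta>\<close> by \<open>-\<lambda>/G\<close> shifts \<open>u\<close> by 1.\<close>

lemma integrable_deriv_psi_conj:
  assumes "G > 0" "fst w \<in> X"
  shows "integrable P (\<lambda>\<xi>. deriv psi_conj (scaled_loss w \<xi>))"
proof (rule Bochner_Integration.integrable_bound)
  define w' where "w' = (fst w, snd w - lam / G)"
  have shift: "scaled_loss w' \<xi> = scaled_loss w \<xi> + 1" for \<xi>
    using lam_pos \<open>G > 0\<close> by (simp add: scaled_loss_def w'_def field_simps)
  show "integrable P (\<lambda>\<xi>. psi_conj (scaled_loss w' \<xi>) - psi_conj (scaled_loss w \<xi>) + M)"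
    using integrable_psi_conj_scaled_loss[of w] integrable_psi_conj_scaled_loss[of w'] \<open>fst w \<in> X\<close>
    by (simp add: w'_def)
  show "(\<lambda>\<xi>. deriv psi_conj (scaled_loss w \<xi>)) \<in> borel_measurable P"
    using borel_measurable_continuous_on[OF continuous_on_deriv_psi_conj borel_measurable_scaled_loss[OF \<open>fst w \<in> X\<close>]] .
  show "AE \<xi> in P. norm (deriv psi_conj (scaled_loss w \<xi>))
      \<le> norm (psi_conj (scaled_loss w' \<xi>) - psi_conj (scaled_loss w \<xi>) + M)"
    using deriv_psi_conj_le deriv_psi_conj_nonneg
    by (intro AE_I2) (simp add: shift, meson abs_ge_self order_trans)
qed

lemma gderiv_sample_obj:
  assumes "\<xi> \<in> space P" "fst w \<in> X"
  shows "GDERIV (\<lambda>w. sample_obj w \<xi>) w :> sample_grad w \<xi>"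
proof -
  let ?d = "deriv psi_conj (scaled_loss w \<xi>)"
  have "((\<lambda>x. l x \<xi>) has_derivative (\<lambda>h. h \<bullet> loss_grad \<xi> (fst w))) (at (fst w))"
    using loss_has_grad[OF assms] by (simp add: gderiv_def)
  from has_derivative_compose[OF has_derivative_fst[OF has_derivative_ident] this]
  have "((\<lambda>w. l (fst w) \<xi>) has_derivative (\<lambda>h. fst h \<bullet> loss_grad \<xi> (fst w))) (at w)"
    by simp
  then have "((\<lambda>w. scaled_loss w \<xi>) has_derivative
      (\<lambda>h. (fst h \<bullet> loss_grad \<xi> (fst w) - G * snd h) / lam)) (at w)"
    unfolding scaled_loss_def using lam_pos by (auto intro!: derivative_eq_intros)
  from DERIV_compose_FDERIV[OF psi_conj_has_deriv this]
  have "((\<lambda>w. sample_obj w \<xi>) has_derivative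
      (\<lambda>h. lam * ((fst h \<bullet> loss_grad \<xi> (fst w) - G * snd h) / lam * ?d) + G * snd h)) (at w)"
    unfolding sample_obj_def by (auto intro!: derivative_eq_intros)
  moreover have "lam * ((fst h \<bullet> loss_grad \<xi> (fst w) - G * snd h) / lam * ?d) + G * snd h
      = h \<bullet> sample_grad w \<xi>" for h
    using lam_pos by (cases h) (simp add: sample_grad_def field_simps)
  ultimately show ?thesis
    by (simp add: gderiv_def)
qed

lemma norm_sample_grad_le:
  assumes "\<xi> \<in> space P" "fst w \<in> X"
  shows "norm (sample_grad w \<xi>) \<le> 2 * G * deriv psi_conj (scaled_loss w \<xi>) + G"
proof -
  let ?d = "deriv psi_conj (scaled_loss w \<xi>)"
  have "norm (sample_grad w \<xi>) \<le> norm (?d *\<^sub>R loss_grad \<xi> (fst w)) + norm (G - G * ?d)"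
    unfolding sample_grad_def by (rule norm_Pair_le)
  also have "\<dots> = ?d * norm (loss_grad \<xi> (fst w)) + \<bar>G - G * ?d\<bar>"
    using deriv_psi_conj_nonneg by simp
  also have "\<dots> \<le> ?d * G + (G + G * ?d)"
  proof (rule add_mono)
    show "?d * norm (loss_grad \<xi> (fst w)) \<le> ?d * G"
      using norm_loss_grad_le[OF assms] deriv_psi_conj_nonneg by (rule mult_left_mono)
    show "\<bar>G - G * ?d\<bar> \<le> G + G * ?d"
      using abs_triangle_ineq4[of G "G * ?d"] G_nonneg deriv_psi_conj_nonneg by (simp add: abs_mult)
  qed
  finally show ?thesis
    by simp
qed

lemma abs_scaled_loss_diff_le:
  assumes "\<xi> \<in> space P" "fst w \<in> X" "fst w' \<in> X"
  shows "\<bar>scaled_loss w \<xi> - scaled_loss w' \<xi>\<bar> \<le> sqrt 2 * G / lam * norm (w - w')"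
proof -
  have diff: "scaled_loss w \<xi> - scaled_loss w' \<xi> = ((l (fst w) \<xi> - l (fst w') \<xi>) - G * (snd w - snd w')) / lam"
    using lam_pos by (simp add: scaled_loss_def field_simps)
  have "\<bar>(l (fst w) \<xi> - l (fst w') \<xi>) - G * (snd w - snd w')\<bar>
      \<le> \<bar>l (fst w) \<xi> - l (fst w') \<xi>\<bar> + G * \<bar>snd w - snd w'\<bar>"
    using abs_triangle_ineq4 G_nonneg by (metis abs_mult abs_of_nonneg)
  also have "\<dots> \<le> G * (norm (fst (w - w')) + norm (snd (w - w')))"
    using abs_loss_diff_le[OF assms] by (simp add: distrib_left)
  also have "\<dots> \<le> G * (sqrt 2 * norm (w - w'))"
    using G_nonneg norm_fst_add_norm_snd_le[of "w - w'"] by (rule mult_left_mono[rotated])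
  finally show ?thesis
    using lam_pos by (simp add: diff abs_div divide_le_eq ac_simps)
qed

lemma norm_sample_grad_diff_le:
  assumes "\<xi> \<in> space P" "fst w \<in> X" "fst w' \<in> X"
  shows "norm (sample_grad w \<xi> - sample_grad w' \<xi>)
    \<le> L * norm (fst w - fst w') * deriv psi_conj (scaled_loss w \<xi>) + 2 * G\<^sup>2 * M / lam * norm (w - w')"
proof -
  let ?d = "\<lambda>w. deriv psi_conj (scaled_loss w \<xi>)"
  have "norm (sample_grad w \<xi> - sample_grad w' \<xi>)
      \<le> \<bar>?d w\<bar> * norm (loss_grad \<xi> (fst w) - loss_grad \<xi> (fst w')) + sqrt 2 * G * \<bar>?d w - ?d w'\<bar>"
    unfolding sample_grad_def by (rule norm_scaled_pair_diff_le[OF norm_loss_grad_le[OF assms(1,3)]])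
  also have "\<dots> \<le> ?d w * (L * norm (fst w - fst w')) + sqrt 2 * G * (M * (sqrt 2 * G / lam * norm (w - w')))"
  proof (rule add_mono)
    show "\<bar>?d w\<bar> * norm (loss_grad \<xi> (fst w) - loss_grad \<xi> (fst w')) \<le> ?d w * (L * norm (fst w - fst w'))"
      using loss_grad_lipschitz[OF assms] deriv_psi_conj_nonneg by (simp add: mult_left_mono)
    have "\<bar>?d w - ?d w'\<bar> \<le> M * (sqrt 2 * G / lam * norm (w - w'))"
      using deriv_psi_conj_lipschitz abs_scaled_loss_diff_le[OF assms] M_nonneg
      by (meson mult_left_mono order_trans)
    then show "sqrt 2 * G * \<bar>?d w - ?d w'\<bar> \<le> sqrt 2 * G * (M * (sqrt 2 * G / lam * norm (w - w')))"
      using G_nonneg by (intro mult_left_mono) auto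
  qed
  also have "\<dots> = L * norm (fst w - fst w') * ?d w + (sqrt 2 * sqrt 2) * (G * G * M / lam) * norm (w - w')"
    by (simp add: algebra_simps)
  finally show ?thesis
    by (simp add: power2_eq_square)
qed

lemma Lhat_has_gradient:
  assumes "G > 0" "fst z \<in> X"
  shows "integrable P (sample_grad z) \<and> GDERIV (Lhat P l \<psi> lam G) z :> (LINT \<xi>|P. sample_grad z \<xi>)"
proof -
  obtain r where "r > 0" "ball (fst z) r \<subseteq> X"
    using open_X assms(2) open_contains_ball by blast
  then have ball_X: "fst w \<in> X" if "w \<in> ball z r" for w
    using that dist_fst_le[of z w] by auto
  have "L \<ge> 0"
    using L_nonneg assms(2) by blast
  let ?d = "\<lambda>\<xi>. deriv psi_conj (scaled_loss z \<xi>)"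
  define C where "C \<xi> = L * ?d \<xi> + 2 * G\<^sup>2 * M / lam" for \<xi>
  show ?thesis
    unfolding Lhat_eq_integral
  proof (rule gderiv_integral[OF \<open>r > 0\<close>, where C = C and B = "\<lambda>\<xi>. 2 * G * ?d \<xi> + G"])
    show "integrable P (sample_obj w)" if "w \<in> ball z r" for w
      using integrable_sample_obj ball_X that by blast
    show "integrable P C" "integrable P (\<lambda>\<xi>. 2 * G * ?d \<xi> + G)"
      unfolding C_def using integrable_deriv_psi_conj[OF assms] by auto
    show "norm (sample_grad z \<xi>) \<le> 2 * G * ?d \<xi> + G" if "\<xi> \<in> space P" for \<xi>
      using norm_sample_grad_le[OF that assms(2)] .
    show "\<bar>sample_obj w \<xi> - sample_obj z \<xi> - (w - z) \<bullet> sample_grad z \<xi>\<bar> \<le> C \<xi> * (norm (w - z))\<^sup>2"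
      if "w \<in> ball z r" "\<xi> \<in> space P" for w \<xi>
    proof (rule gderiv_linearization_bound[OF convex_ball])
      show "GDERIV (\<lambda>w. sample_obj w \<xi>) v :> sample_grad v \<xi>" if "v \<in> ball z r" for v
        using gderiv_sample_obj[OF \<open>\<xi> \<in> space P\<close> ball_X[OF that]] .
      show "norm (sample_grad v \<xi> - sample_grad z \<xi>) \<le> C \<xi> * norm (v - z)" if "v \<in> ball z r" for v
      proof -
        have "norm (sample_grad v \<xi> - sample_grad z \<xi>) = norm (sample_grad z \<xi> - sample_grad v \<xi>)"
          by (rule norm_minus_commute)
        also have "\<dots> \<le> L * norm (fst z - fst v) * ?d \<xi> + 2 * G\<^sup>2 * M / lam * norm (z - v)"
          by (rule norm_sample_grad_diff_le[OF \<open>\<xi> \<in> space P\<close> assms(2) ball_X[OF that]])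
        also have "\<dots> \<le> L * norm (z - v) * ?d \<xi> + 2 * G\<^sup>2 * M / lam * norm (z - v)"
          using dist_fst_le[of z v] \<open>L \<ge> 0\<close> deriv_psi_conj_nonneg
          by (intro add_mono mult_right_mono mult_left_mono) (auto simp: dist_norm)
        also have "\<dots> = C \<xi> * norm (v - z)"
          by (simp add: C_def algebra_simps norm_minus_commute)
        finally show ?thesis .
      qed
      show "z \<in> ball z r" "w \<in> ball z r"
        using \<open>r > 0\<close> \<open>w \<in> ball z r\<close> by auto
      show "C \<xi> \<ge> 0"
        using \<open>L \<ge> 0\<close> M_nonneg lam_pos deriv_psi_conj_nonneg by (simp add: C_def)
    qed
  qed
qed

lemma integral_deriv_psi_conj_le:
  assumes "G > 0" "fst z \<in> X"
  shows "(LINT \<xi>|P. deriv psi_conj (scaled_loss z \<xi>)) \<le> 1 + norm (LINT \<xi>|P. sample_grad z \<xi>) / G"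
proof -
  let ?D = "LINT \<xi>|P. deriv psi_conj (scaled_loss z \<xi>)"
  let ?g = "LINT \<xi>|P. sample_grad z \<xi>"
  have "snd ?g = (LINT \<xi>|P. snd (sample_grad z \<xi>))"
    using Lhat_has_gradient[OF assms] by (simp add: integral_bounded_linear[OF bounded_linear_snd])
  also have "\<dots> = G - G * ?D"
    using integrable_deriv_psi_conj[OF assms] by (simp add: sample_grad_def prob_space)
  moreover have "\<bar>snd ?g\<bar> \<le> norm ?g"
    by (metis norm_snd_le prod.collapse real_norm_def)
  ultimately have "G - G * ?D \<ge> - norm ?g"
    by linarith
  with \<open>G > 0\<close> show ?thesis
    by (simp add: field_simps)
qed

lemma Lhat_gradient_lipschitz:
  assumes "G > 0" "fst z \<in> X" "fst z' \<in> X"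
  defines "g \<equiv> LINT \<xi>|P. sample_grad z \<xi>" and "g' \<equiv> LINT \<xi>|P. sample_grad z' \<xi>"
  shows "norm (g - g') \<le> (L + 2 * G\<^sup>2 * M / lam + L / G * norm g) * norm (z - z')"
proof -
  let ?d = "\<lambda>\<xi>. deriv psi_conj (scaled_loss z \<xi>)"
  let ?c = "2 * G\<^sup>2 * M / lam"
  have "L \<ge> 0" "?c \<ge> 0"
    using L_nonneg assms(2) M_nonneg lam_pos by auto
  have int: "integrable P (sample_grad z)" "integrable P (sample_grad z')"
    using Lhat_has_gradient assms by blast+
  have "norm (g - g') \<le> (LINT \<xi>|P. norm (sample_grad z \<xi> - sample_grad z' \<xi>))"
    unfolding g_def g'_def using int by (simp flip: Bochner_Integration.integral_diff)
  also have "\<dots> \<le> (LINT \<xi>|P. L * norm (fst z - fst z') * ?d \<xi> + ?c * norm (z - z'))"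
    using int integrable_deriv_psi_conj[OF assms(1,2)] norm_sample_grad_diff_le[OF _ assms(2,3)]
    by (intro integral_mono) auto
  also have "\<dots> = L * norm (fst z - fst z') * (LINT \<xi>|P. ?d \<xi>) + ?c * norm (z - z')"
    using integrable_deriv_psi_conj[OF assms(1,2)] by (simp add: prob_space)
  also have "\<dots> \<le> L * norm (z - z') * (1 + norm g / G) + ?c * norm (z - z')"
    using dist_fst_le[of z z'] \<open>L \<ge> 0\<close> \<open>?c \<ge> 0\<close> integral_deriv_psi_conj_le[OF assms(1,2)]
      Bochner_Integration.integral_nonneg[of P ?d] deriv_psi_conj_nonneg
    by (intro add_mono mult_mono mult_left_mono) (auto simp: g_def dist_norm)
  also have "\<dots> = (L + ?c + L / G * norm g) * norm (z - z')"
    using \<open>G > 0\<close> by (simp add: field_simps)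
  finally show ?thesis .
qed

lemma gderiv_Lhat_degenerate:
  assumes "G = 0" "fst w \<in> X"
  shows "GDERIV (Lhat P l \<psi> lam G) w :> 0"
proof -
  have "sample_obj w \<xi> = sample_obj v \<xi>" if "fst v \<in> X" "\<xi> \<in> space P" for v \<xi>
    unfolding sample_obj_def scaled_loss_def using abs_loss_diff_le[OF that(2) assms(2) that(1)] assms(1)
    by simp
  then have "Lhat P l \<psi> lam G w = Lhat P l \<psi> lam G v" if "v \<in> X \<times> UNIV" for v
    using that unfolding Lhat_eq_integral by (intro Bochner_Integration.integral_cong) (auto simp: mem_Times_iff)
  then have "(Lhat P l \<psi> lam G has_derivative (\<lambda>h. 0)) (at w)"
    using open_X assms(2)
    by (intro has_derivative_transform_within_open[OF has_derivative_const, where s = "X \<times> UNIV"])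
      (auto intro: open_Times simp: mem_Times_iff)
  then show ?thesis
    by (simp add: gderiv_def)
qed

end

theorem lemma3p4:
  fixes P :: "'b measure"
    and l :: "real^'d \<Rightarrow> 'b \<Rightarrow> real"
    and X :: "(real^'d) set"
    and \<psi> :: "real \<Rightarrow> ereal"
    and lam G L M :: real
  assumes P: "prob_space P"
    and X: "open X"
    and lam: "lam > 0"
    and lip: "\<And>\<xi>. \<xi> \<in> space P \<Longrightarrow> G-lipschitz_on X (\<lambda>x. l x \<xi>)"
    and sm: "\<And>\<xi>. \<xi> \<in> space P \<Longrightarrow> smooth_on X (\<lambda>x. l x \<xi>) L"
    and meas: "\<And>x. x \<in> X \<Longrightarrow> (\<lambda>\<xi>. l x \<xi>) \<in> borel_measurable P"
    and psi_convex: "convex_ereal_fun \<psi>"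
    and psi_nonneg: "\<And>s. \<psi> s \<ge> 0"
    and psi_one: "\<psi> 1 = 0"
    and psi_neg: "\<And>t. t < 0 \<Longrightarrow> \<psi> t = \<infinity>"
    and conj_finite: "\<And>t. \<bar>conj_fun \<psi> t\<bar> \<noteq> \<infinity>"
    and conj_smooth: "smooth_on UNIV (\<lambda>t. real_of_ereal (conj_fun \<psi> t)) M"
    and integr: "\<And>x \<eta>. x \<in> X \<Longrightarrow>
        integrable P (\<lambda>\<xi>. real_of_ereal (conj_fun \<psi> ((l x \<xi> - G * \<eta>) / lam)))"
    and x: "x \<in> X" and x': "x' \<in> X"
  shows "\<exists>g g'. GDERIV (Lhat P l \<psi> lam G) (x, \<eta>) :> g
              \<and> GDERIV (Lhat P l \<psi> lam G) (x', \<eta>') :> g'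
              \<and> norm (g - g') \<le> ((L + 2 * G^2 * M / lam) + L / G * norm g)
                                   * norm ((x, \<eta>) - (x', \<eta>'))"
proof -
  interpret dro_objective P l X \<psi> lam G L M
    using P X lam lip sm meas psi_neg conj_finite conj_smooth integr
    by (simp add: dro_objective_def dro_objective_axioms_def)
  show ?thesis
  proof (cases "G = 0")
    case True
    have "L \<ge> 0"
      using L_nonneg x by blast
    with True have bound: "norm (0 - 0) \<le> ((L + 2 * G^2 * M / lam) + L / G * norm 0) * norm ((x, \<eta>) - (x', \<eta>'))"
      by simp
    have "GDERIV (Lhat P l \<psi> lam G) (x, \<eta>) :> 0" "GDERIV (Lhat P l \<psi> lam G) (x', \<eta>') :> 0"
      using gderiv_Lhat_degenerate[OF True] x x' by simp_all
    with bound show ?thesis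
      by blast
  next
    case False
    with G_nonneg have "G > 0"
      by simp
    moreover have "fst (x, \<eta>) \<in> X" "fst (x', \<eta>') \<in> X"
      using x x' by simp_all
    ultimately show ?thesis
      using Lhat_has_gradient Lhat_gradient_lipschitz by blast
  qed
qed

end
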